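(* Let $(\Omega,P,\pi)$ be a finite irreducible reversible Markov chain (in continuous time), let $\epsilon\in(0,1)$, $k\ge0$, and let $A\subset\Omega$ satisfy $\pi(A)\ge1-\epsilon$. Then there exists $I\subset\Omega$ with $\pi(I)\ge1-\frac{\epsilon}{2\cdot3^k}$ such that $$\mathbb E_z[T_A]\le(3+k)(1-\epsilon)^{-1}t_{\mathrm{rel}}\log3\quad\text{for every } z\in I.$$
   Context: Continuous-time chain with heat kernel $H_t(x,y)=\sum_{j\ge0}e^{-t}\frac{t^j}{j!}P^j(x,y)$; reversible means $\pi(x)P(x,y)=\pi(y)P(y,x)$. $\mathbb E_z$: expectation for the chain started at $z$. $T_A:=\inf\{t\ge0:X_t\in A\}$. $t_{\mathrm{rel}}:=(1-\lambda_2)^{-1}$, $\lambda_2$ the second largest eigenvalue of $P$. *)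

theory Defs
  imports "HOL-Analysis.Analysis" "Jordan_Normal_Form.Char_Poly"
begin

text \<open>State space Omega = {..<n}; P is the transition matrix, pi the reversible measure.\<close>

definition trans_mat :: "nat \<Rightarrow> (nat \<Rightarrow> nat \<Rightarrow> real) \<Rightarrow> real mat" where
  "trans_mat n P = mat n n (\<lambda>(i,j). P i j)"

definition irreducible_chain :: "nat \<Rightarrow> (nat \<Rightarrow> nat \<Rightarrow> real) \<Rightarrow> bool" where
  "irreducible_chain n P \<longleftrightarrow>
     (\<forall>i<n. \<forall>j<n. \<exists>m. (trans_mat n P ^\<^sub>m m) $$ (i,j) > 0)"

definition eigenvalues_desc :: "nat \<Rightarrow> (nat \<Rightarrow> nat \<Rightarrow> real) \<Rightarrow> real list" where
  "eigenvalues_desc n P = rev (sorted_list_of_multiset (proots (char_poly (trans_mat n P))))"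

definition lambda2 :: "nat \<Rightarrow> (nat \<Rightarrow> nat \<Rightarrow> real) \<Rightarrow> real" where
  "lambda2 n P = eigenvalues_desc n P ! 1"

definition t_rel :: "nat \<Rightarrow> (nat \<Rightarrow> nat \<Rightarrow> real) \<Rightarrow> real" where
  "t_rel n P = 1 / (1 - lambda2 n P)"

text \<open>avoid n P A j z = probability that the (jump) chain started at z stays outside A
  at steps 0,...,j.\<close>
fun avoid :: "nat \<Rightarrow> (nat \<Rightarrow> nat \<Rightarrow> real) \<Rightarrow> nat set \<Rightarrow> nat \<Rightarrow> nat \<Rightarrow> real" where
  "avoid n P A 0 z = (if z \<in> A then 0 else 1)"
| "avoid n P A (Suc j) z = (if z \<in> A then 0 else (\<Sum>y<n. P z y * avoid n P A j y))"

text \<open>Survival probability P_z(T_A > t) of the continuous-time chain with heat kernel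
  H_t = sum_j e^{-t} t^j/j! P^j (Poissonised jump chain).\<close>
definition survival :: "nat \<Rightarrow> (nat \<Rightarrow> nat \<Rightarrow> real) \<Rightarrow> nat set \<Rightarrow> nat \<Rightarrow> real \<Rightarrow> ennreal" where
  "survival n P A z t = (\<Sum>j. ennreal (exp (-t) * t ^ j / fact j * avoid n P A j z))"

definition exp_hit :: "nat \<Rightarrow> (nat \<Rightarrow> nat \<Rightarrow> real) \<Rightarrow> nat set \<Rightarrow> nat \<Rightarrow> ennreal" where
  "exp_hit n P A z = (\<integral>\<^sup>+ t. survival n P A z t * indicator {0..} t \<partial>lborel)"

end

theory Submission
  imports Defs "HOL-Probability.Distributions"
begin

text \<open>
  Let \<open>B\<close> be the complement of \<open>A\<close> and \<open>g\<close> the vector of expected hitting times of \<open>A\<close>,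
  i.e. the solution of \<open>g = 1 + P g\<close> on \<open>B\<close>, \<open>g = 0\<close> on \<open>A\<close>. Functions supported on \<open>B\<close> have
  mass \<open>\<langle>f, 1\<rangle>\<^sup>2 \<le> \<epsilon> \<parallel>f\<parallel>\<^sup>2\<close> along the constants, so the Poincare inequality for \<open>P\<close> yields the
  gap \<open>\<langle>f, P f\<rangle> \<le> (1 - \<gamma>) \<parallel>f\<parallel>\<^sup>2\<close> with \<open>\<gamma> = (1 - \<lambda>\<^sub>2)(1 - \<epsilon>)\<close>. Hence the lazy chain
  killed on \<open>A\<close>, \<open>L = 1\<^sub>B (I + P)/2\<close>, is a positive operator on \<open>\<ell>\<^sup>2(\<pi>)\<close> of norm at most
  \<open>1 - \<gamma>/2\<close>. Iterating \<open>g = 1\<^sub>B/2 + L g\<close> gives \<open>g \<le> M/2 + L\<^sup>M g\<close>, while \<open>\<parallel>g\<parallel>\<^sup>2 \<le> \<epsilon>/\<gamma>\<^sup>2\<close>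
  because \<open>\<gamma> \<parallel>g\<parallel>\<^sup>2 \<le> \<langle>g, 1\<rangle>\<close>. For \<open>M \<approx> 2(3 + k) log 3 / \<gamma>\<close> Chebyshev's inequality
  shows that \<open>L\<^sup>M g \<le> 1/\<gamma>\<close> off a set of \<open>\<pi>\<close>-measure at most \<open>\<epsilon> / (2 \<cdot> 3\<^sup>k)\<close>.
\<close>

lemma linear_coeff_zero_if_quadratic_nonpos:
  fixes a b :: real
  assumes "\<And>t. t * a + t\<^sup>2 * b \<le> 0"
  shows "a = 0"
proof (rule ccontr)
  assume a: "a \<noteq> 0"
  define d where "d = \<bar>b\<bar> + 1"
  have d: "d > 0" unfolding d_def by simp
  have "(a/d) * a + (a/d)\<^sup>2 * b \<le> 0" by (rule assms)
  then have "d\<^sup>2 * ((a/d) * a + (a/d)\<^sup>2 * b) \<le> 0" by (simp add: mult_nonneg_nonpos)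
  moreover have "d\<^sup>2 * ((a/d) * a + (a/d)\<^sup>2 * b) = a\<^sup>2 * (d + b)"
    using d by (simp add: field_simps power2_eq_square)
  moreover have "a\<^sup>2 * (d + b) > 0" using a unfolding d_def by (intro mult_pos_pos) auto
  ultimately show False by simp
qed

lemma discriminant_le_if_quadratic_nonneg:
  fixes a b c :: real
  assumes q: "\<And>t. 0 \<le> a + 2 * t * b + t\<^sup>2 * c" and c: "c \<ge> 0"
  shows "b\<^sup>2 \<le> a * c"
proof (cases "c = 0")
  case True
  have a: "a \<ge> 0" using q[of 0] by simp
  have "b = 0"
  proof (rule ccontr)
    assume b: "b \<noteq> 0"
    have "0 \<le> a + 2 * (-(a+1)/(2*b)) * b + (-(a+1)/(2*b))\<^sup>2 * c" by (rule q)
    also have "\<dots> = -1" using b True by (simp add: field_simps)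
    finally show False by simp
  qed
  then show ?thesis using a True by simp
next
  case False
  then have cp: "c > 0" using c by simp
  have "0 \<le> a + 2 * (-b/c) * b + (-b/c)\<^sup>2 * c" by (rule q)
  also have "\<dots> = a - b\<^sup>2 / c" using cp by (simp add: field_simps power2_eq_square)
  finally have "b\<^sup>2 / c \<le> a" by simp
  then show ?thesis using cp by (simp add: field_simps mult.commute)
qed

lemma weighted_Cauchy_Schwarz_sum:
  fixes w f :: "'a \<Rightarrow> real"
  assumes "\<And>i. i \<in> S \<Longrightarrow> w i \<ge> 0"
  shows "(\<Sum>i\<in>S. w i * f i)\<^sup>2 \<le> (\<Sum>i\<in>S. w i) * (\<Sum>i\<in>S. w i * (f i)\<^sup>2)"
proof -
  have "(\<Sum>i\<in>S. sqrt (w i) * (sqrt (w i) * f i))\<^sup>2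
      \<le> (\<Sum>i\<in>S. (sqrt (w i))\<^sup>2) * (\<Sum>i\<in>S. (sqrt (w i) * f i)\<^sup>2)"
    by (rule Cauchy_Schwarz_ineq_sum)
  moreover have "(\<Sum>i\<in>S. sqrt (w i) * (sqrt (w i) * f i)) = (\<Sum>i\<in>S. w i * f i)"
    using assms by (intro sum.cong) (auto simp: mult.assoc[symmetric])
  moreover have "(\<Sum>i\<in>S. (sqrt (w i))\<^sup>2) = (\<Sum>i\<in>S. w i)"
    using assms by (intro sum.cong) auto
  moreover have "(\<Sum>i\<in>S. (sqrt (w i) * f i)\<^sup>2) = (\<Sum>i\<in>S. w i * (f i)\<^sup>2)"
    using assms by (intro sum.cong) (auto simp: power_mult_distrib)
  ultimately show ?thesis by simp
qed

lemma poly_pos_if_no_root_ge: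
  fixes p :: "real poly"
  assumes lc: "lead_coeff p > 0" and no_root: "\<And>x. x \<ge> a \<Longrightarrow> poly p x \<noteq> 0"
  shows "poly p a > 0"
proof (rule ccontr)
  assume "\<not> poly p a > 0"
  then have neg: "poly p a < 0" using no_root[of a] by simp
  obtain N where N: "\<forall>x\<ge>N. poly p x \<ge> lead_coeff p" using poly_pinfty_gt_lc[OF lc] by auto
  define b where "b = max N (a + 1)"
  have "poly p b > 0" using N lc unfolding b_def by (meson max.cobounded1 order_less_le_trans)
  moreover have "a < b" unfolding b_def by simp
  ultimately obtain x where "a < x" "poly p x = 0"
    using poly_IVT_pos[of a b p] neg by auto
  with no_root[of x] show False by simp
qed

lemma sorted_le_last:
  fixes xs :: "'a::linorder list"
  assumes "sorted xs" "y \<in> set xs"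
  shows "y \<le> last xs"
  using assms
proof (induction xs)
  case (Cons a xs)
  then show ?case
    by (cases "xs = []") (auto intro: order_trans[OF _ Cons.IH] dest: last_in_set)
qed simp

lemma second_largest_of_multiset:
  fixes R :: "'a::linorder multiset"
  assumes simple: "count R a = 1" and le: "\<forall>x\<in>#R. x \<le> a" and \<mu>: "\<mu> \<in># R" "\<mu> \<noteq> a"
  shows "\<mu> \<le> rev (sorted_list_of_multiset R) ! 1 \<and> rev (sorted_list_of_multiset R) ! 1 < a"
proof -
  define R' where "R' = R - {#a#}"
  have R: "R = add_mset a R'"
    unfolding R'_def using simple by (metis count_eq_zero_iff insert_DiffM zero_neq_one)
  have lt: "\<forall>x\<in>#R'. x < a"
    using simple le unfolding R by (auto simp: order.order_iff_strict count_eq_zero_iff)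
  define L where "L = sorted_list_of_multiset R'"
  have \<mu>L: "\<mu> \<in> set L" using \<mu> unfolding R L_def by auto
  then have L_ne: "L \<noteq> []" by auto
  have "sorted_list_of_multiset R = L @ [a]"
    unfolding R L_def using lt by (simp add: sorted_insort_is_snoc less_imp_le)
  then have "rev (sorted_list_of_multiset R) ! 1 = last L"
    using L_ne by (simp add: hd_rev[symmetric] hd_conv_nth nth_Cons')
  moreover have "\<mu> \<le> last L" using sorted_le_last \<mu>L unfolding L_def by blast
  moreover have "last L < a" using lt L_ne unfolding L_def by (metis last_in_set set_sorted_list_of_multiset)
  ultimately show ?thesis by simp
qed

text \<open>The Poisson weights \<open>e\<^sup>-\<^sup>t t\<^sup>j / j!\<close> are Erlang densities in \<open>t\<close>, so each integrates to \<open>1\<close>.\<close>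
lemma nn_integral_Poisson_weight:
  fixes c :: real
  assumes "c \<ge> 0"
  shows "(\<integral>\<^sup>+ t. ennreal (exp (-t) * t ^ j / fact j * c) * indicator {0..} t \<partial>lborel) = ennreal c"
proof -
  have "(\<integral>\<^sup>+ t. ennreal (exp (-t) * t ^ j / fact j * c) * indicator {0..} t \<partial>lborel)
      = (\<integral>\<^sup>+ t. ennreal c * ennreal (erlang_density j 1 t * t ^ 0) \<partial>lborel)"
  proof (intro nn_integral_cong)
    fix t :: real
    show "ennreal (exp (-t) * t ^ j / fact j * c) * indicator {0..} t
        = ennreal c * ennreal (erlang_density j 1 t * t ^ 0)"
    proof (cases "t < 0")
      case True
      then show ?thesis by (simp add: erlang_density_def indicator_def)
    next
      case False
      then have "exp (-t) * t ^ j / fact j * c = c * (erlang_density j 1 t * t ^ 0)"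
        by (simp add: erlang_density_def field_simps)
      then show ?thesis using False assms by (simp add: indicator_def ennreal_mult'[symmetric])
    qed
  qed
  also have "\<dots> = ennreal c * (\<integral>\<^sup>+ t. ennreal (erlang_density j 1 t * t ^ 0) \<partial>lborel)"
    by (rule nn_integral_cmult) measurable
  also have "(\<integral>\<^sup>+ t. ennreal (erlang_density j 1 t * t ^ 0) \<partial>lborel) = 1"
    using nn_integral_erlang_ith_moment[of 1 j 0] by simp
  finally show ?thesis by simp
qed

lemma lazy_contraction_power_le:
  fixes \<gamma> :: real and k M :: nat
  assumes \<gamma>: "0 < \<gamma>" "\<gamma> \<le> 2" and M: "\<gamma> * real M \<ge> 2 * (3 + real k) * ln 3 - 4"
  shows "((1 - \<gamma> / 2)\<^sup>2) ^ M \<le> 1 / (2 * 3 ^ k)"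
proof -
  have "(1 - \<gamma> / 2)\<^sup>2 \<le> (exp (- (\<gamma> / 2)))\<^sup>2"
    using \<gamma> exp_ge_add_one_self[of "- (\<gamma> / 2)"] by (intro power_mono) auto
  also have "\<dots> = exp (- \<gamma>)" by (simp add: power2_eq_square exp_add[symmetric])
  finally have "((1 - \<gamma> / 2)\<^sup>2) ^ M \<le> exp (- \<gamma>) ^ M" by (intro power_mono) auto
  also have "\<dots> = exp (- (\<gamma> * real M))" by (simp add: exp_of_nat_mult[symmetric] mult.commute)
  also have "\<dots> \<le> exp (4 - real (6 + 2 * k) * ln 3)" using M by (simp add: algebra_simps)
  also have "\<dots> = exp 4 / 3 ^ (6 + 2 * k)"
    using exp_of_nat_mult[of "6 + 2 * k" "ln 3 :: real"] by (simp add: exp_diff)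
  also have "\<dots> \<le> (272 / 100) ^ 4 / 3 ^ (6 + 2 * k)"
  proof (rule divide_right_mono)
    have "exp (4::real) = exp 1 ^ 4" using exp_of_nat_mult[of 4 "1::real"] by simp
    also have "\<dots> \<le> (272 / 100) ^ 4" using e_less_272 by (intro power_mono) auto
    finally show "exp (4::real) \<le> (272 / 100) ^ 4" .
  qed simp
  also have "\<dots> \<le> 1 / (2 * 3 ^ k)"
  proof -
    have "(3::real) ^ 6 * 3 ^ k \<le> 3 ^ 6 * 3 ^ k * 3 ^ k" by simp
    also have "\<dots> = 3 ^ (6 + 2 * k)" unfolding mult_2 power_add mult.assoc ..
    finally have "(272 / 100) ^ 4 / 3 ^ (6 + 2 * k) \<le> (272 / 100) ^ 4 / (3 ^ 6 * (3::real) ^ k)"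
      by (rule divide_left_mono) simp_all
    also have "\<dots> = ((272 / 100) ^ 4 / 3 ^ 6) / 3 ^ k" by simp
    also have "\<dots> \<le> (1 / 2) / 3 ^ k" by (rule divide_right_mono) (simp_all add: eval_nat_numeral)
    also have "\<dots> = 1 / (2 * 3 ^ k)" by simp
    finally show ?thesis .
  qed
  finally show ?thesis .
qed

lemma one_le_ln_3: "1 \<le> ln (3::real)"
  using e_less_272 by (subst ln_ge_iff) auto

lemma exists_expansion_length:
  fixes \<gamma> :: real and k :: nat
  assumes \<gamma>: "0 < \<gamma>" "\<gamma> \<le> 2"
  obtains M :: nat where "real M / 2 + 1 / \<gamma> \<le> (3 + real k) * ln 3 / \<gamma>"
    "2 * (3 + real k) * ln 3 - 4 \<le> \<gamma> * real M"
proof -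
  define x where "x = 2 * ((3 + real k) * ln 3 - 1) / \<gamma>"
  have "1 * ln 3 \<le> (3 + real k) * ln (3::real)" using one_le_ln_3 by (intro mult_right_mono) auto
  then have "0 \<le> (3 + real k) * ln 3 - 1" using one_le_ln_3 by linarith
  then have "0 \<le> x" unfolding x_def using \<gamma> by simp
  then have x: "real (nat \<lfloor>x\<rfloor>) \<le> x" "x - 1 \<le> real (nat \<lfloor>x\<rfloor>)"
    using floor_correct[of x] by linarith+
  show ?thesis
  proof (rule that)
    show "real (nat \<lfloor>x\<rfloor>) / 2 + 1 / \<gamma> \<le> (3 + real k) * ln 3 / \<gamma>"
    proof -
      have "x / 2 = ((3 + real k) * ln 3 - 1) / \<gamma>" unfolding x_def using \<gamma> by (simp add: field_simps)
      moreover have "((3 + real k) * ln 3 - 1) / \<gamma> + 1 / \<gamma> = (3 + real k) * ln 3 / \<gamma>"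
        by (simp add: diff_divide_distrib)
      ultimately show ?thesis using x(1) by linarith
    qed
    have "\<gamma> * (x - 1) \<le> \<gamma> * real (nat \<lfloor>x\<rfloor>)" using x(2) \<gamma> by (intro mult_left_mono) simp_all
    moreover have "\<gamma> * (x - 1) = 2 * (3 + real k) * ln 3 - 2 - \<gamma>"
      unfolding x_def using \<gamma> by (simp add: field_simps)
    ultimately show "2 * (3 + real k) * ln 3 - 4 \<le> \<gamma> * real (nat \<lfloor>x\<rfloor>)" using \<gamma> by linarith
  qed
qed

section \<open>Reversible chains\<close>

locale reversible_chain =
  fixes n :: nat and P :: "nat \<Rightarrow> nat \<Rightarrow> real" and \<pi> :: "nat \<Rightarrow> real"
  assumes n_ge_2: "n \<ge> 2"
    and P_nonneg: "\<And>i j. i < n \<Longrightarrow> j < n \<Longrightarrow> P i j \<ge> 0"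
    and P_row_sum: "\<And>i. i < n \<Longrightarrow> (\<Sum>j<n. P i j) = 1"
    and pi_pos: "\<And>i. i < n \<Longrightarrow> \<pi> i > 0"
    and pi_sum: "(\<Sum>i<n. \<pi> i) = 1"
    and reversible: "\<And>i j. i < n \<Longrightarrow> j < n \<Longrightarrow> \<pi> i * P i j = \<pi> j * P j i"
    and irreducible: "irreducible_chain n P"
begin

definition pinner :: "(nat \<Rightarrow> real) \<Rightarrow> (nat \<Rightarrow> real) \<Rightarrow> real" where
  "pinner f g = (\<Sum>i<n. \<pi> i * f i * g i)"

definition Pop :: "(nat \<Rightarrow> real) \<Rightarrow> nat \<Rightarrow> real" where
  "Pop f = (\<lambda>i. \<Sum>j<n. P i j * f j)"

lemma pinner_commute: "pinner f g = pinner g f"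
  unfolding pinner_def by (simp add: mult_ac)

lemma pinner_add_left: "pinner (\<lambda>i. f i + g i) h = pinner f h + pinner g h"
  unfolding pinner_def by (simp add: algebra_simps sum.distrib)

lemma pinner_diff_left: "pinner (\<lambda>i. f i - g i) h = pinner f h - pinner g h"
  unfolding pinner_def by (simp add: algebra_simps sum_subtractf)

lemma pinner_scale_left: "pinner (\<lambda>i. c * f i) h = c * pinner f h"
  unfolding pinner_def by (simp add: algebra_simps sum_distrib_left)

lemma pinner_add_right: "pinner h (\<lambda>i. f i + g i) = pinner h f + pinner h g"
  unfolding pinner_def by (simp add: algebra_simps sum.distrib)

lemma pinner_diff_right: "pinner h (\<lambda>i. f i - g i) = pinner h f - pinner h g"
  unfolding pinner_def by (simp add: algebra_simps sum_subtractf)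

lemma pinner_scale_right: "pinner h (\<lambda>i. c * f i) = c * pinner h f"
  unfolding pinner_def by (simp add: algebra_simps sum_distrib_left)

lemmas pinner_linear =
  pinner_add_left pinner_diff_left pinner_scale_left
  pinner_add_right pinner_diff_right pinner_scale_right

lemma pinner_cong:
  "(\<And>i. i < n \<Longrightarrow> f i = f' i) \<Longrightarrow> (\<And>i. i < n \<Longrightarrow> g i = g' i) \<Longrightarrow> pinner f g = pinner f' g'"
  unfolding pinner_def by (intro sum.cong) auto

lemma pinner_self_nonneg: "pinner f f \<ge> 0"
  unfolding pinner_def by (intro sum_nonneg) (simp add: mult.assoc less_imp_le pi_pos)

lemma pinner_self_eq_0D:
  assumes "pinner f f = 0" "i < n"
  shows "f i = 0"
proof -
  have "\<forall>j\<in>{..<n}. \<pi> j * f j * f j = 0"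
    using assms(1) unfolding pinner_def
    by (subst sum_nonneg_eq_0_iff[symmetric]) (auto simp: mult.assoc less_imp_le pi_pos)
  with assms(2) pi_pos[OF assms(2)] show ?thesis by force
qed

lemma pinner_one_one: "pinner (\<lambda>_. 1) (\<lambda>_. 1) = 1"
  unfolding pinner_def using pi_sum by simp

lemma pinner_const_left: "pinner (\<lambda>_. c) (\<lambda>_. 1) = c"
  unfolding pinner_def using pi_sum by (simp add: sum_distrib_right[symmetric])

lemma pinner_indicator_left: "a < n \<Longrightarrow> pinner (\<lambda>i. if i = a then c else 0) g = \<pi> a * c * g a"
  unfolding pinner_def
  by (subst sum.cong[OF refl, of _ _ "\<lambda>i. if i = a then \<pi> a * c * g a else 0"]) auto

lemma Pop_add: "Pop (\<lambda>i. f i + g i) = (\<lambda>i. Pop f i + Pop g i)"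
  unfolding Pop_def by (simp add: algebra_simps sum.distrib)

lemma Pop_scale: "Pop (\<lambda>i. c * f i) = (\<lambda>i. c * Pop f i)"
  unfolding Pop_def by (simp add: algebra_simps sum_distrib_left)

lemma Pop_const: "i < n \<Longrightarrow> Pop (\<lambda>_. c) i = c"
  unfolding Pop_def using P_row_sum by (simp add: sum_distrib_right[symmetric])

lemma Pop_cong: "(\<And>i. i < n \<Longrightarrow> f i = f' i) \<Longrightarrow> Pop f = Pop f'"
  unfolding Pop_def by (intro ext sum.cong) auto

lemma pinner_Pop_swap: "pinner f (Pop g) = pinner (Pop f) g"
proof -
  have "pinner f (Pop g) = (\<Sum>i<n. \<Sum>j<n. \<pi> i * P i j * f i * g j)"
    unfolding pinner_def Pop_def by (simp add: sum_distrib_left mult_ac)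
  also have "\<dots> = (\<Sum>i<n. \<Sum>j<n. \<pi> j * P j i * f i * g j)"
    by (intro sum.cong refl) (simp add: reversible)
  also have "\<dots> = (\<Sum>j<n. \<Sum>i<n. \<pi> j * P j i * f i * g j)"
    by (rule sum.swap)
  also have "\<dots> = pinner (Pop f) g"
    unfolding pinner_def Pop_def by (simp add: sum_distrib_left sum_distrib_right mult_ac)
  finally show ?thesis .
qed

lemma pinner_Pop_commute: "pinner f (Pop g) = pinner g (Pop f)"
  using pinner_Pop_swap pinner_commute by simp

lemma pinner_Pop_one: "pinner f (Pop (\<lambda>_. 1)) = pinner f (\<lambda>_. 1)"
  by (rule pinner_cong) (auto simp: Pop_const)

lemma pi_stationary: "j < n \<Longrightarrow> (\<Sum>i<n. \<pi> i * P i j) = \<pi> j"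
proof -
  assume j: "j < n"
  have "(\<Sum>i<n. \<pi> i * P i j) = (\<Sum>i<n. \<pi> j * P j i)" by (intro sum.cong) (auto simp: reversible j)
  also have "\<dots> = \<pi> j" using P_row_sum[OF j] by (simp add: sum_distrib_left[symmetric])
  finally show ?thesis .
qed

text \<open>Expand \<open>0 \<le> \<Sum>\<^sub>i\<^sub>j \<pi>\<^sub>i P\<^sub>i\<^sub>j (f\<^sub>i + f\<^sub>j)\<^sup>2\<close>, using stationarity for the \<open>f\<^sub>j\<^sup>2\<close> terms.\<close>
lemma pinner_Pop_self_ge: "pinner f (Pop f) \<ge> - pinner f f"
proof -
  have sq: "(\<Sum>i<n. \<Sum>j<n. \<pi> i * P i j * f i ^ 2) = pinner f f"
    unfolding pinner_def
    by (intro sum.cong refl)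
      (simp add: sum_distrib_right[symmetric] sum_distrib_left[symmetric] P_row_sum power2_eq_square mult_ac)
  have sq': "(\<Sum>i<n. \<Sum>j<n. \<pi> i * P i j * f j ^ 2) = pinner f f"
    unfolding pinner_def
    by (subst sum.swap, intro sum.cong refl)
      (simp add: sum_distrib_right[symmetric] pi_stationary power2_eq_square)
  have "0 \<le> (\<Sum>i<n. \<Sum>j<n. \<pi> i * P i j * (f i + f j)\<^sup>2)"
    using pi_pos P_nonneg by (intro sum_nonneg mult_nonneg_nonneg) (auto intro: less_imp_le)
  also have "\<dots> = (\<Sum>i<n. \<Sum>j<n. \<pi> i * P i j * f i ^ 2) + (\<Sum>i<n. \<Sum>j<n. \<pi> i * P i j * f j ^ 2)
      + 2 * (\<Sum>i<n. \<Sum>j<n. \<pi> i * P i j * (f i * f j))"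
    by (simp add: power2_sum algebra_simps sum.distrib sum_distrib_left)
  also have "(\<Sum>i<n. \<Sum>j<n. \<pi> i * P i j * (f i * f j)) = pinner f (Pop f)"
    unfolding pinner_def Pop_def by (simp add: sum_distrib_left mult_ac)
  finally show ?thesis using sq sq' by simp
qed

lemma trans_mat_carrier: "trans_mat n P \<in> carrier_mat n n"
  unfolding trans_mat_def by simp

lemma trans_mat_index: "i < n \<Longrightarrow> j < n \<Longrightarrow> trans_mat n P $$ (i,j) = P i j"
  unfolding trans_mat_def by simp

lemma trans_mat_mult_vec:
  assumes "v \<in> carrier_vec n" "i < n"
  shows "(trans_mat n P *\<^sub>v v) $ i = (\<Sum>j<n. P i j * v $ j)"
  using assms trans_mat_carrier
  by (simp add: scalar_prod_def trans_mat_index atLeast0LessThan)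

lemma closed_set_unreachable:
  assumes M: "M \<subseteq> {..<n}" and closed: "\<And>j l. j \<in> M \<Longrightarrow> l < n \<Longrightarrow> P j l > 0 \<Longrightarrow> l \<in> M"
    and j: "j \<in> M"
  shows "l < n \<Longrightarrow> l \<notin> M \<Longrightarrow> (trans_mat n P ^\<^sub>m m) $$ (j,l) = 0"
proof (induction m arbitrary: l)
  case 0
  then show ?case using M j trans_mat_carrier by auto
next
  case (Suc m)
  have "(trans_mat n P ^\<^sub>m Suc m) $$ (j,l) = (\<Sum>r\<in>{0..<n}. (trans_mat n P ^\<^sub>m m) $$ (j,r) * P r l)"
    using j M Suc.prems trans_mat_carrier by (auto simp: scalar_prod_def trans_mat_index)
  also have "\<dots> = 0"
  proof (intro sum.neutral ballI)
    fix r assume r: "r \<in> {0..<n}"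
    show "(trans_mat n P ^\<^sub>m m) $$ (j,r) * P r l = 0"
    proof (cases "r \<in> M")
      case True
      then have "P r l = 0" using closed Suc.prems P_nonneg[of r l] r by force
      then show ?thesis by simp
    next
      case False
      then show ?thesis using Suc.IH r by auto
    qed
  qed
  finally show ?case .
qed

lemma closed_set_eq_all:
  assumes M: "M \<subseteq> {..<n}" and closed: "\<And>j l. j \<in> M \<Longrightarrow> l < n \<Longrightarrow> P j l > 0 \<Longrightarrow> l \<in> M"
    and "M \<noteq> {}"
  shows "M = {..<n}"
proof (rule ccontr)
  assume "M \<noteq> {..<n}"
  then obtain l where l: "l < n" "l \<notin> M" using M by auto
  obtain j where j: "j \<in> M" using \<open>M \<noteq> {}\<close> by auto
  then obtain m where "(trans_mat n P ^\<^sub>m m) $$ (j,l) > 0"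
    using irreducible l M unfolding irreducible_chain_def by blast
  with closed_set_unreachable[OF M closed j l] show False by simp
qed

text \<open>The states where \<open>\<bar>v\<bar>\<close> is maximal form a closed set, hence all states by irreducibility.\<close>
lemma maximum_principle:
  assumes A: "A \<subseteq> {..<n}" "A \<noteq> {}" and x: "x \<ge> 1"
    and vA: "\<And>i. i \<in> A \<Longrightarrow> v i = 0"
    and eigen: "\<And>i. i < n \<Longrightarrow> i \<notin> A \<Longrightarrow> x * v i = (\<Sum>j<n. P i j * v j)"
    and i: "i < n"
  shows "v i = 0"
proof (rule ccontr)
  assume vi: "v i \<noteq> 0"
  define m where "m = Max ((\<lambda>i. \<bar>v i\<bar>) ` {..<n})"
  have m_ge: "\<And>l. l < n \<Longrightarrow> \<bar>v l\<bar> \<le> m" unfolding m_def by (intro Max_ge) auto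
  have m_pos: "m > 0" using m_ge[OF i] vi by linarith
  define M where "M = {l. l < n \<and> \<bar>v l\<bar> = m}"
  have M_ne: "M \<noteq> {}"
  proof -
    have "m \<in> (\<lambda>i. \<bar>v i\<bar>) ` {..<n}" unfolding m_def using i by (intro Max_in) auto
    then show ?thesis unfolding M_def by auto
  qed
  have closed: "l \<in> M" if j: "j \<in> M" and l: "l < n" and Pjl: "P j l > 0" for j l
  proof -
    have jn: "j < n" and vj: "\<bar>v j\<bar> = m" using j unfolding M_def by auto
    have jA: "j \<notin> A" using vA vj m_pos by auto
    have "m \<le> \<bar>x * v j\<bar>" using vj x m_pos by (simp add: abs_mult)
    also have "\<dots> = \<bar>\<Sum>l<n. P j l * v l\<bar>" using eigen[OF jn jA] by simp
    also have "\<dots> \<le> (\<Sum>l<n. P j l * \<bar>v l\<bar>)"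
      using P_nonneg jn by (auto intro!: order_trans[OF sum_abs] sum_mono simp: abs_mult)
    finally have "m \<le> (\<Sum>l<n. P j l * \<bar>v l\<bar>)" .
    moreover have "(\<Sum>l<n. P j l * (m - \<bar>v l\<bar>)) = m * (\<Sum>l<n. P j l) - (\<Sum>l<n. P j l * \<bar>v l\<bar>)"
      by (simp add: algebra_simps sum_subtractf sum_distrib_left)
    ultimately have "(\<Sum>l<n. P j l * (m - \<bar>v l\<bar>)) \<le> 0" using P_row_sum[OF jn] by simp
    moreover have nonneg: "\<forall>l\<in>{..<n}. P j l * (m - \<bar>v l\<bar>) \<ge> 0"
      using P_nonneg jn m_ge by (auto intro!: mult_nonneg_nonneg)
    ultimately have "\<forall>l\<in>{..<n}. P j l * (m - \<bar>v l\<bar>) = 0"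
      by (subst sum_nonneg_eq_0_iff[symmetric]) (auto intro: order.antisym sum_nonneg)
    then show ?thesis using Pjl l unfolding M_def by force
  qed
  have "M = {..<n}" by (rule closed_set_eq_all[OF _ closed M_ne]) (auto simp: M_def)
  moreover obtain a where "a \<in> A" using A by auto
  ultimately show False using vA[OF \<open>a \<in> A\<close>] A m_pos unfolding M_def by auto
qed

lemma harmonic_imp_const:
  assumes harmonic: "\<And>i. i < n \<Longrightarrow> Pop f i = f i" and i: "i < n"
  shows "f i = f 0"
proof -
  have "f i - f 0 = 0"
  proof (rule maximum_principle[of "{0}" 1 "\<lambda>i. f i - f 0"])
    show "1 * (f j - f 0) = (\<Sum>l<n. P j l * (f l - f 0))" if "j < n" for j
      using harmonic[OF that] Pop_const[OF that, of "f 0"]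
      by (simp add: Pop_def right_diff_distrib sum_subtractf)
  qed (use n_ge_2 i in auto)
  then show ?thesis by simp
qed

lemma eigenvalue_le_1:
  assumes i: "i < n" "v i \<noteq> 0"
    and eigen: "\<And>i. i < n \<Longrightarrow> x * v i = (\<Sum>j<n. P i j * v j)"
  shows "x \<le> 1"
proof -
  define m where "m = Max ((\<lambda>i. \<bar>v i\<bar>) ` {..<n})"
  have m_ge: "\<And>l. l < n \<Longrightarrow> \<bar>v l\<bar> \<le> m" unfolding m_def by (intro Max_ge) auto
  have m_pos: "m > 0" using m_ge[OF i(1)] i by linarith
  have "m \<in> (\<lambda>i. \<bar>v i\<bar>) ` {..<n}" unfolding m_def using i by (intro Max_in) auto
  then obtain j where jn: "j < n" and vj: "\<bar>v j\<bar> = m" by auto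
  have "\<bar>x\<bar> * m = \<bar>x * v j\<bar>" using vj by (simp add: abs_mult)
  also have "\<dots> = \<bar>\<Sum>l<n. P j l * v l\<bar>" using eigen[OF jn] by simp
  also have "\<dots> \<le> (\<Sum>l<n. P j l * \<bar>v l\<bar>)"
    using P_nonneg jn by (auto intro!: order_trans[OF sum_abs] sum_mono simp: abs_mult)
  also have "\<dots> \<le> (\<Sum>l<n. P j l * m)"
    using P_nonneg jn m_ge by (intro sum_mono mult_left_mono) auto
  also have "\<dots> = 1 * m" using P_row_sum[OF jn] by (simp add: sum_distrib_right[symmetric])
  finally have "\<bar>x\<bar> \<le> 1" using m_pos by (rule mult_right_le_imp_le)
  then show ?thesis by simp
qed

lemma char_poly_root_imp_eigenfun:
  assumes "poly (char_poly (trans_mat n P)) x = 0"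
  shows "\<exists>v. (\<exists>i<n. v i \<noteq> 0) \<and> (\<forall>i<n. x * v i = (\<Sum>j<n. P i j * v j))"
proof -
  have "eigenvalue (trans_mat n P) x"
    using eigenvalue_root_char_poly[OF trans_mat_carrier] assms by simp
  then obtain w where "eigenvector (trans_mat n P) w x" unfolding eigenvalue_def by auto
  then have wc: "w \<in> carrier_vec n" and w0: "w \<noteq> 0\<^sub>v n" and we: "trans_mat n P *\<^sub>v w = x \<cdot>\<^sub>v w"
    unfolding eigenvector_def using trans_mat_carrier by auto
  obtain i where i: "i < n" "w $ i \<noteq> 0"
  proof (rule ccontr)
    assume "\<not> thesis"
    then have "w = 0\<^sub>v n" using that wc by (intro eq_vecI) auto
    then show False using w0 by simp
  qed
  have "x * w $ j = (\<Sum>l<n. P j l * w $ l)" if j: "j < n" for j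
  proof -
    have "(trans_mat n P *\<^sub>v w) $ j = (x \<cdot>\<^sub>v w) $ j" using we by simp
    then show ?thesis using trans_mat_mult_vec[OF wc j] wc j by simp
  qed
  then show ?thesis using i by (intro exI[of _ "\<lambda>i. w $ i"]) blast
qed

lemma eigenfun_imp_char_poly_root:
  assumes "i < n" "v i \<noteq> 0" and eigen: "\<And>i. i < n \<Longrightarrow> x * v i = (\<Sum>j<n. P i j * v j)"
  shows "poly (char_poly (trans_mat n P)) x = 0"
proof -
  define w where "w = vec n v"
  have wc: "w \<in> carrier_vec n" unfolding w_def by simp
  have "w \<noteq> 0\<^sub>v n" using assms(1,2) unfolding w_def by (metis index_vec index_zero_vec(1))
  moreover have "trans_mat n P *\<^sub>v w = x \<cdot>\<^sub>v w"
  proof (rule eq_vecI)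
    fix i assume "i < dim_vec (x \<cdot>\<^sub>v w)"
    then have i: "i < n" using wc by simp
    have "(trans_mat n P *\<^sub>v w) $ i = (\<Sum>j<n. P i j * w $ j)" by (rule trans_mat_mult_vec[OF wc i])
    also have "\<dots> = (\<Sum>j<n. P i j * v j)" unfolding w_def by (intro sum.cong) auto
    finally have "(trans_mat n P *\<^sub>v w) $ i = (\<Sum>j<n. P i j * v j)" .
    then show "(trans_mat n P *\<^sub>v w) $ i = (x \<cdot>\<^sub>v w) $ i" using eigen i unfolding w_def by simp
  qed (use wc trans_mat_carrier in auto)
  ultimately have "eigenvalue (trans_mat n P) x"
    unfolding eigenvalue_def eigenvector_def using wc trans_mat_carrier by auto
  then show ?thesis using eigenvalue_root_char_poly[OF trans_mat_carrier] by simp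
qed

lemma char_poly_trans_mat_nonzero: "char_poly (trans_mat n P) \<noteq> 0"
proof -
  have "coeff (char_poly (trans_mat n P)) n = 1"
    using degree_monic_char_poly[OF trans_mat_carrier] by (rule conjunct2)
  then show ?thesis by (metis coeff_0 zero_neq_one)
qed

lemma char_poly_root_1: "poly (char_poly (trans_mat n P)) 1 = 0"
proof (rule eigenfun_imp_char_poly_root[of 0 "\<lambda>_. 1"])
  show "0 < n" using n_ge_2 by simp
qed (use P_row_sum in \<open>auto simp: sum_distrib_right[symmetric]\<close>)

lemma char_poly_erase_no_root_ge_1:
  assumes a: "a < n" and x: "x \<ge> 1"
  shows "poly (char_poly (mat_erase (trans_mat n P) a a)) x \<noteq> 0"
proof
  let ?E = "mat_erase (trans_mat n P) a a"
  have EC: "?E \<in> carrier_mat n n" using trans_mat_carrier by simp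
  assume "poly (char_poly ?E) x = 0"
  then have "eigenvalue ?E x" using eigenvalue_root_char_poly[OF EC] by simp
  then obtain w where "eigenvector ?E w x" unfolding eigenvalue_def by auto
  then have wc: "w \<in> carrier_vec n" and w0: "w \<noteq> 0\<^sub>v n" and we: "?E *\<^sub>v w = x \<cdot>\<^sub>v w"
    unfolding eigenvector_def using EC by auto
  have Ew: "x * w $ i = (\<Sum>j<n. (if i = a \<or> j = a then 0 else P i j) * w $ j)" if i: "i < n" for i
  proof -
    have "x * w $ i = (?E *\<^sub>v w) $ i" using we i wc by simp
    also have "\<dots> = (\<Sum>j<n. (if i = a \<or> j = a then 0 else P i j) * w $ j)"
      using wc i trans_mat_carrier
      by (simp add: scalar_prod_def mat_erase_def atLeast0LessThan)
        (intro sum.cong, auto simp: trans_mat_index)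
    finally show ?thesis .
  qed
  have wa: "w $ a = 0" using Ew[OF a] x by simp
  have "w $ i = 0" if i: "i < n" for i
  proof (rule maximum_principle[of "{a}" x "\<lambda>i. w $ i"])
    show "x * w $ j = (\<Sum>l<n. P j l * w $ l)" if j: "j < n" "j \<notin> {a}" for j
    proof -
      have "x * w $ j = (\<Sum>l<n. (if j = a \<or> l = a then 0 else P j l) * w $ l)" by (rule Ew[OF j(1)])
      also have "\<dots> = (\<Sum>l<n. P j l * w $ l)" using j wa by (intro sum.cong) auto
      finally show ?thesis .
    qed
  qed (use a x wa i in auto)
  then have "w = 0\<^sub>v n" using wc by (intro eq_vecI) auto
  then show False using w0 by simp
qed

text \<open>Simplicity of the root \<open>1\<close>: the derivative of the characteristic polynomial at \<open>1\<close> is the sum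
  of the characteristic polynomials of the principal minors at \<open>1\<close>, and each of these is positive
  since it is monic without roots in \<open>[1, \<infinity>)\<close>.\<close>
lemma order_1_char_poly: "order 1 (char_poly (trans_mat n P)) = 1"
proof -
  let ?cp = "char_poly (trans_mat n P)"
  have minor_pos: "poly (char_poly (mat_erase (trans_mat n P) i i)) 1 > 0" if i: "i < n" for i
  proof (rule poly_pos_if_no_root_ge)
    have "mat_erase (trans_mat n P) i i \<in> carrier_mat n n" using trans_mat_carrier by simp
    from degree_monic_char_poly[OF this]
    show "lead_coeff (char_poly (mat_erase (trans_mat n P) i i)) > 0" by simp
  qed (use char_poly_erase_no_root_ge_1[OF i] in auto)
  have "poly (monom 1 1 * pderiv ?cp) 1 = poly (\<Sum>i<n. char_poly (mat_erase (trans_mat n P) i i)) 1"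
    using pderiv_char_poly_mat_erase[OF trans_mat_carrier] by simp
  then have "poly (pderiv ?cp) 1 = (\<Sum>i<n. poly (char_poly (mat_erase (trans_mat n P) i i)) 1)"
    by (simp add: poly_monom poly_sum)
  also have "\<dots> > 0" using minor_pos n_ge_2 by (intro sum_pos) (auto simp: lessThan_empty_iff)
  finally have "poly (pderiv ?cp) 1 \<noteq> 0" by simp
  then have "order 1 (pderiv ?cp) = 0" by (simp add: order_root)
  then show ?thesis using order_pderiv[OF char_poly_trans_mat_nonzero char_poly_root_1] by simp
qed

lemma abs_le_if_pinner_self_eq_1:
  assumes f: "pinner f f = 1" and i: "i < n"
  shows "\<bar>f i\<bar> \<le> 1 + (\<Sum>j<n. 1 / \<pi> j)"
proof -
  have "\<pi> i * f i * f i \<le> pinner f f"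
    unfolding pinner_def using i by (intro member_le_sum) (auto simp: mult.assoc less_imp_le pi_pos)
  then have "(f i)\<^sup>2 \<le> 1 / \<pi> i" using f pi_pos[OF i] by (simp add: field_simps power2_eq_square)
  moreover have "1 / \<pi> i \<le> (\<Sum>j<n. 1 / \<pi> j)"
    using i by (intro member_le_sum) (auto simp: less_imp_le pi_pos)
  moreover have "0 \<le> (\<bar>f i\<bar> - 1)\<^sup>2" by simp
  then have "2 * \<bar>f i\<bar> \<le> (f i)\<^sup>2 + 1" by (simp add: power2_diff power2_abs)
  ultimately show ?thesis by (smt (verit) zero_le_power2)
qed

lemma normalize_pinner:
  assumes "pinner h h > 0"
  defines "c \<equiv> 1 / sqrt (pinner h h)"
  shows "pinner (\<lambda>i. c * h i) (\<lambda>i. c * h i) = 1"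
    "pinner (\<lambda>i. c * h i) g = c * pinner h g"
    "pinner (\<lambda>i. c * h i) (Pop (\<lambda>i. c * h i)) = pinner h (Pop h) / pinner h h"
proof -
  have "c * c = 1 / pinner h h" unfolding c_def using assms(1) by (simp add: real_sqrt_mult[symmetric])
  then show "pinner (\<lambda>i. c * h i) (\<lambda>i. c * h i) = 1"
    "pinner (\<lambda>i. c * h i) g = c * pinner h g"
    "pinner (\<lambda>i. c * h i) (Pop (\<lambda>i. c * h i)) = pinner h (Pop h) / pinner h h"
    using assms(1) by (simp_all only: Pop_scale pinner_scale_left pinner_scale_right mult.assoc[symmetric])
      simp_all
qed

lemma exists_unit_perp_one: "\<exists>e. pinner e (\<lambda>_. 1) = 0 \<and> pinner e e = 1"
proof -
  define e where "e = (\<lambda>i::nat. (if i = 0 then 1 / \<pi> 0 else 0) - (if i = 1 then 1 / \<pi> 1 else 0))"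
  have e1: "pinner e (\<lambda>_. 1) = 0" and ee: "pinner e e > 0"
    using n_ge_2 pi_pos[of 0] pi_pos[of 1]
    by (simp_all add: e_def pinner_diff_left pinner_indicator_left add_pos_pos)
  then show ?thesis using normalize_pinner(1)[OF ee] normalize_pinner(2)[OF ee, of "\<lambda>_. 1"] by auto
qed

text \<open>The unit sphere of \<open>1\<^sup>\<bottom>\<close> is compact once the coordinates outside \<open>{..<n}\<close>, which \<open>pinner\<close>
  and \<open>Pop\<close> ignore, are fixed to \<open>0\<close>.\<close>
lemma exists_Rayleigh_max_on_unit_sphere:
  "\<exists>f. pinner f (\<lambda>_. 1) = 0 \<and> pinner f f = 1 \<and>
     (\<forall>h. pinner h (\<lambda>_. 1) = 0 \<longrightarrow> pinner h h = 1 \<longrightarrow> pinner h (Pop h) \<le> pinner f (Pop f))"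
proof -
  define C where "C = 1 + (\<Sum>j<n. 1 / \<pi> j)"
  define X :: "(nat \<Rightarrow> real) set" where "X = PiE UNIV (\<lambda>i. if i < n then {-C..C} else {0})"
  define K where "K = X \<inter> ({f. pinner f (\<lambda>_. 1) = 0} \<inter> {f. pinner f f = 1})"
  have coord: "continuous_on S (\<lambda>f::nat\<Rightarrow>real. f i)" for S i
    by (rule continuous_on_subset[of UNIV]) simp_all
  have "compactin (product_topology (\<lambda>i. euclidean) UNIV) X"
    unfolding X_def compactin_PiE by auto
  then have "compact X" by (simp add: euclidean_product_topology)
  moreover have "closed ({f. pinner f (\<lambda>_. 1) = 0} \<inter> {f. pinner f f = 1})"
    unfolding pinner_def by (intro closed_Int closed_Collect_eq continuous_intros coord)
  ultimately have "compact K" unfolding K_def by blast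
  define restrict where "restrict h = (\<lambda>i. if i < n then h i else 0)" for h :: "nat \<Rightarrow> real"
  have restrict_pinner: "pinner (restrict h) g = pinner h g" "pinner g (restrict h) = pinner g h" for h g
    by (rule pinner_cong; simp add: restrict_def)+
  have restrict_Pop: "Pop (restrict h) = Pop h" for h
    by (rule Pop_cong) (simp add: restrict_def)
  have restrict_in: "restrict h \<in> K" if h1: "pinner h (\<lambda>_. 1) = 0" and hh: "pinner h h = 1" for h
  proof -
    have "\<bar>h i\<bar> \<le> C" if "i < n" for i
      using abs_le_if_pinner_self_eq_1[OF hh that] unfolding C_def .
    then have "restrict h \<in> X"
      unfolding X_def by (auto simp: PiE_def extensional_def restrict_def abs_le_iff minus_le_iff)
    then show ?thesis unfolding K_def using h1 hh by (simp add: restrict_pinner)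
  qed
  obtain e where "pinner e (\<lambda>_. 1) = 0" "pinner e e = 1" using exists_unit_perp_one by blast
  then have "K \<noteq> {}" using restrict_in by blast
  moreover have "continuous_on K (\<lambda>f. pinner f (Pop f))"
    unfolding pinner_def Pop_def by (intro continuous_intros coord)
  ultimately obtain f where "f \<in> K" and max: "\<And>y. y \<in> K \<Longrightarrow> pinner y (Pop y) \<le> pinner f (Pop f)"
    using continuous_attains_sup[OF \<open>compact K\<close>] by blast
  moreover have "pinner h (Pop h) \<le> pinner f (Pop f)" if "pinner h (\<lambda>_. 1) = 0" "pinner h h = 1" for h
    using max[OF restrict_in[OF that]] by (simp add: restrict_pinner restrict_Pop)
  ultimately show ?thesis unfolding K_def by blast
qed

lemma Rayleigh_bound:
  assumes max: "\<And>h. pinner h (\<lambda>_. 1) = 0 \<Longrightarrow> pinner h h = 1 \<Longrightarrow> pinner h (Pop h) \<le> \<mu>"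
    and h1: "pinner h (\<lambda>_. 1) = 0"
  shows "pinner h (Pop h) \<le> \<mu> * pinner h h"
proof (cases "pinner h h = 0")
  case True
  then have "pinner h (Pop h) = pinner (\<lambda>_. 0) (Pop h)"
    using pinner_self_eq_0D by (intro pinner_cong) auto
  then show ?thesis using True by (simp add: pinner_def)
next
  case False
  then have hh: "pinner h h > 0" using pinner_self_nonneg[of h] by simp
  define c where "c = 1 / sqrt (pinner h h)"
  have "pinner (\<lambda>i. c * h i) (Pop (\<lambda>i. c * h i)) \<le> \<mu>"
    unfolding c_def by (rule max) (simp_all only: normalize_pinner[OF hh] h1 mult_zero_right)
  then show ?thesis using hh unfolding c_def normalize_pinner(3)[OF hh] by (simp add: field_simps)
qed

text \<open>First variation of the Rayleigh quotient at a maximiser \<open>f\<close> in the directions \<open>g \<bottom> 1\<close>: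
  \<open>\<langle>g, P f - \<mu> f\<rangle> = 0\<close>, and the residual \<open>P f - \<mu> f\<close> is itself such a direction.\<close>
lemma Rayleigh_maximizer_eigenfun:
  assumes f1: "pinner f (\<lambda>_. 1) = 0" and f2: "pinner f f = 1"
    and max: "\<And>h. pinner h (\<lambda>_. 1) = 0 \<Longrightarrow> pinner h (Pop h) \<le> pinner f (Pop f) * pinner h h"
    and i: "i < n"
  shows "Pop f i = pinner f (Pop f) * f i"
proof -
  define \<mu> where "\<mu> = pinner f (Pop f)"
  have stationary: "pinner g (Pop f) = \<mu> * pinner g f" if g1: "pinner g (\<lambda>_. 1) = 0" for g
  proof -
    have "t * (2 * (pinner g (Pop f) - \<mu> * pinner g f)) + t\<^sup>2 * (pinner g (Pop g) - \<mu> * pinner g g) \<le> 0"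
      for t
    proof -
      define h where "h = (\<lambda>i. f i + t * g i)"
      have "pinner h (\<lambda>_. 1) = 0" unfolding h_def using f1 g1 by (simp add: pinner_linear)
      then have "pinner h (Pop h) \<le> \<mu> * pinner h h" using max unfolding \<mu>_def by simp
      moreover have "pinner h (Pop h) = \<mu> + 2 * t * pinner g (Pop f) + t\<^sup>2 * pinner g (Pop g)"
        unfolding h_def Pop_add Pop_scale \<mu>_def using pinner_Pop_commute[of f g]
        by (simp add: pinner_linear power2_eq_square algebra_simps)
      moreover have "pinner h h = 1 + 2 * t * pinner g f + t\<^sup>2 * pinner g g"
        unfolding h_def using f2 pinner_commute[of f g]
        by (simp add: pinner_linear power2_eq_square algebra_simps)
      ultimately show ?thesis by (simp add: algebra_simps)
    qed
    then have "2 * (pinner g (Pop f) - \<mu> * pinner g f) = 0"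
      by (rule linear_coeff_zero_if_quadratic_nonpos)
    then show ?thesis by simp
  qed
  define r where "r = (\<lambda>i. Pop f i - \<mu> * f i)"
  have "pinner (Pop f) (\<lambda>_. 1) = 0"
    using f1 pinner_Pop_one[of f] pinner_Pop_swap[of f "\<lambda>_. 1"] by simp
  then have "pinner r (\<lambda>_. 1) = 0"
    unfolding r_def using f1 by (simp add: pinner_diff_left pinner_scale_left)
  then have "pinner r r = 0"
    using stationary unfolding r_def by (simp add: pinner_diff_right pinner_scale_right)
  then show ?thesis using pinner_self_eq_0D[of r i] i unfolding r_def \<mu>_def by simp
qed

lemma harmonic_perp_one_eq_0:
  assumes harmonic: "\<And>i. i < n \<Longrightarrow> Pop f i = f i" and f1: "pinner f (\<lambda>_. 1) = 0" and i: "i < n"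
  shows "f i = 0"
proof -
  have const: "f i = f 0" if "i < n" for i using harmonic_imp_const harmonic that by blast
  have "pinner f (\<lambda>_. 1) = pinner (\<lambda>_. f 0) (\<lambda>_. 1)" by (rule pinner_cong[OF const]) simp_all
  then have "f 0 = 0" using f1 pinner_const_left by simp
  then show ?thesis using const[OF i] by simp
qed

lemma exists_second_eigenvalue:
  "\<exists>\<mu>. -1 \<le> \<mu> \<and> \<mu> < 1 \<and> poly (char_poly (trans_mat n P)) \<mu> = 0 \<and>
     (\<forall>h. pinner h (\<lambda>_. 1) = 0 \<longrightarrow> pinner h (Pop h) \<le> \<mu> * pinner h h)"
proof -
  obtain f where f1: "pinner f (\<lambda>_. 1) = 0" and f2: "pinner f f = 1"
    and max1: "\<And>h. pinner h (\<lambda>_. 1) = 0 \<Longrightarrow> pinner h h = 1 \<Longrightarrow> pinner h (Pop h) \<le> pinner f (Pop f)"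
    using exists_Rayleigh_max_on_unit_sphere by blast
  define \<mu> where "\<mu> = pinner f (Pop f)"
  have bound: "\<And>h. pinner h (\<lambda>_. 1) = 0 \<Longrightarrow> pinner h (Pop h) \<le> \<mu> * pinner h h"
    unfolding \<mu>_def using max1 by (rule Rayleigh_bound)
  have eigen: "\<mu> * f i = (\<Sum>j<n. P i j * f j)" if "i < n" for i
    using Rayleigh_maximizer_eigenfun[OF f1 f2 bound[unfolded \<mu>_def] that]
    unfolding \<mu>_def Pop_def by simp
  obtain i0 where i0: "i0 < n" "f i0 \<noteq> 0"
  proof (rule ccontr)
    assume "\<not> thesis"
    then have "pinner f f = pinner (\<lambda>_. 0) f" using that by (intro pinner_cong) auto
    then show False using f2 by (simp add: pinner_def)
  qed
  have "\<mu> \<noteq> 1"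
  proof
    assume "\<mu> = 1"
    have "Pop f i = f i" if "i < n" for i
    proof -
      have "\<mu> * f i = Pop f i" using eigen[OF that] by (simp only: Pop_def)
      then show ?thesis using \<open>\<mu> = 1\<close> by simp
    qed
    then show False using harmonic_perp_one_eq_0 f1 i0 by blast
  qed
  moreover have "\<mu> \<le> 1" by (rule eigenvalue_le_1[OF i0 eigen])
  ultimately have "\<mu> < 1" by simp
  moreover have "-1 \<le> \<mu>" using pinner_Pop_self_ge[of f] f2 unfolding \<mu>_def by simp
  moreover have "poly (char_poly (trans_mat n P)) \<mu> = 0"
    by (rule eigenfun_imp_char_poly_root[OF i0 eigen])
  ultimately show ?thesis using bound by blast
qed

text \<open>Since \<open>1\<close> is a simple root and every root is \<open>\<le> 1\<close>, the second entry of the decreasing list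
  of roots is the largest root below \<open>1\<close>.\<close>
lemma lambda2_ge_eigenvalue:
  assumes "\<mu> < 1" "poly (char_poly (trans_mat n P)) \<mu> = 0"
  shows "\<mu> \<le> lambda2 n P \<and> lambda2 n P < 1"
  unfolding lambda2_def eigenvalues_desc_def
proof (rule second_largest_of_multiset)
  let ?cp = "char_poly (trans_mat n P)"
  show "count (proots ?cp) 1 = 1" using order_1_char_poly char_poly_trans_mat_nonzero by simp
  show "\<forall>x\<in>#proots ?cp. x \<le> 1"
  proof
    fix x assume "x \<in># proots ?cp"
    then have "poly ?cp x = 0" using char_poly_trans_mat_nonzero by simp
    then obtain v i where "i < n" "v i \<noteq> 0" "\<And>i. i < n \<Longrightarrow> x * v i = (\<Sum>j<n. P i j * v j)"
      using char_poly_root_imp_eigenfun by blast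
    then show "x \<le> 1" by (rule eigenvalue_le_1)
  qed
  show "\<mu> \<in># proots ?cp" "\<mu> \<noteq> 1" using assms char_poly_trans_mat_nonzero by auto
qed

lemma lambda2_lt_1: "lambda2 n P < 1"
proof -
  obtain \<mu> where "\<mu> < 1" "poly (char_poly (trans_mat n P)) \<mu> = 0"
    using exists_second_eigenvalue by blast
  from lambda2_ge_eigenvalue[OF this] show ?thesis by simp
qed

lemma lambda2_ge_minus_1: "-1 \<le> lambda2 n P"
proof -
  obtain \<mu> where "-1 \<le> \<mu>" "\<mu> < 1" "poly (char_poly (trans_mat n P)) \<mu> = 0"
    using exists_second_eigenvalue by blast
  with lambda2_ge_eigenvalue[of \<mu>] show ?thesis by linarith
qed

lemma Poincare_inequality:
  assumes "pinner h (\<lambda>_. 1) = 0"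
  shows "pinner h (Pop h) \<le> lambda2 n P * pinner h h"
proof -
  obtain \<mu> where "\<mu> < 1" "poly (char_poly (trans_mat n P)) \<mu> = 0"
    and bound: "\<And>h. pinner h (\<lambda>_. 1) = 0 \<Longrightarrow> pinner h (Pop h) \<le> \<mu> * pinner h h"
    using exists_second_eigenvalue by blast
  from lambda2_ge_eigenvalue[OF this(1,2)]
  have "\<mu> * pinner h h \<le> lambda2 n P * pinner h h"
    using pinner_self_nonneg by (intro mult_right_mono) auto
  with bound[OF assms] show ?thesis by linarith
qed

lemma Poincare_inequality_uncentered:
  "pinner f (Pop f) \<le> lambda2 n P * pinner f f + (1 - lambda2 n P) * (pinner f (\<lambda>_. 1))\<^sup>2"
proof -
  define c where "c = pinner f (\<lambda>_. 1)"
  define h where "h = (\<lambda>i. f i - c * 1)"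
  have f: "f = (\<lambda>i. h i + c * 1)" unfolding h_def by simp
  have h1: "pinner h (\<lambda>_. 1) = 0" unfolding h_def c_def by (simp add: pinner_linear pinner_const_left)
  have "pinner (\<lambda>_. 1) (Pop h) = 0"
    using h1 pinner_Pop_one[of h] pinner_Pop_commute[of "\<lambda>_. 1" h] pinner_commute by simp
  then have "pinner f (Pop f) = pinner h (Pop h) + c\<^sup>2"
    unfolding f Pop_add Pop_scale using h1 pinner_Pop_one[of h] pinner_Pop_one[of "\<lambda>_. 1"]
    by (simp only: pinner_linear) (simp add: pinner_one_one power2_eq_square)
  moreover have "pinner f f = pinner h h + c\<^sup>2"
    unfolding f using h1 pinner_commute[of h "\<lambda>_. 1"]
    by (simp only: pinner_linear) (simp add: pinner_one_one power2_eq_square)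
  ultimately show ?thesis using Poincare_inequality[OF h1] unfolding c_def by (simp add: algebra_simps)
qed

lemma Chebyshev_level_set:
  assumes "s > 0"
  shows "s\<^sup>2 * (\<Sum>x\<in>{x. x < n \<and> w x > s}. \<pi> x) \<le> pinner w w"
proof -
  let ?S = "{x. x < n \<and> w x > s}"
  have "s\<^sup>2 * (\<Sum>x\<in>?S. \<pi> x) = (\<Sum>x\<in>?S. \<pi> x * s\<^sup>2)"
    by (simp add: sum_distrib_left mult.commute)
  also have "\<dots> \<le> (\<Sum>x\<in>?S. \<pi> x * (w x)\<^sup>2)"
  proof (rule sum_mono)
    fix x assume "x \<in> ?S"
    then have "s\<^sup>2 \<le> (w x)\<^sup>2" "0 \<le> \<pi> x" using assms pi_pos[of x] by (auto intro: power_mono)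
    then show "\<pi> x * s\<^sup>2 \<le> \<pi> x * (w x)\<^sup>2" by (rule mult_left_mono)
  qed
  also have "\<dots> \<le> (\<Sum>x<n. \<pi> x * (w x)\<^sup>2)"
    using pi_pos by (intro sum_mono2) (auto simp: less_imp_le)
  also have "\<dots> = pinner w w" unfolding pinner_def by (simp add: power2_eq_square mult.assoc)
  finally show ?thesis .
qed

end

section \<open>Hitting a set of large stationary measure\<close>

locale hitting_chain = reversible_chain +
  fixes A :: "nat set" and \<epsilon> :: real
  assumes A_sub: "A \<subseteq> {..<n}" and eps_pos: "0 < \<epsilon>" and eps_lt_1: "\<epsilon> < 1"
    and A_big: "(\<Sum>x\<in>A. \<pi> x) \<ge> 1 - \<epsilon>"
begin

definition B :: "nat set" where "B = {..<n} - A"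

lemma A_nonempty: "A \<noteq> {}"
  using A_big eps_lt_1 by auto

text \<open>The equations of the expected hitting times of \<open>A\<close>; at unit jump rate these are the same for the
  jump chain and for the continuous-time chain.\<close>
definition solves_hitting_eq :: "(nat \<Rightarrow> real) \<Rightarrow> bool" where
  "solves_hitting_eq g \<longleftrightarrow> (\<forall>i. n \<le> i \<or> i \<in> A \<longrightarrow> g i = 0) \<and>
     (\<forall>i<n. i \<notin> A \<longrightarrow> g i = 1 + (\<Sum>j<n. P i j * g j))"

lemma hitting_eq_off_B: "solves_hitting_eq g \<Longrightarrow> n \<le> i \<or> i \<in> A \<Longrightarrow> g i = 0"
  unfolding solves_hitting_eq_def by blast

lemma hitting_eq_on_B: "solves_hitting_eq g \<Longrightarrow> i < n \<Longrightarrow> i \<notin> A \<Longrightarrow> g i = 1 + (\<Sum>j<n. P i j * g j)"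
  unfolding solves_hitting_eq_def by blast

definition killed_mat :: "real mat" where
  "killed_mat = mat n n (\<lambda>(i,j). of_bool (i = j) - (if i \<notin> A \<and> j \<notin> A then P i j else 0))"

lemma killed_mat_carrier: "killed_mat \<in> carrier_mat n n"
  unfolding killed_mat_def by simp

lemma killed_mat_mult_vec:
  assumes v: "v \<in> carrier_vec n" and i: "i < n"
  shows "(killed_mat *\<^sub>v v) $ i = v $ i - (\<Sum>j<n. (if i \<notin> A \<and> j \<notin> A then P i j else 0) * v $ j)"
proof -
  have "(killed_mat *\<^sub>v v) $ i
      = (\<Sum>j<n. of_bool (i = j) * v $ j) - (\<Sum>j<n. (if i \<notin> A \<and> j \<notin> A then P i j else 0) * v $ j)"
    using v i killed_mat_carrier
    by (simp add: scalar_prod_def killed_mat_def atLeast0LessThan left_diff_distrib sum_subtractf)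
  also have "(\<Sum>j<n. of_bool (i = j) * v $ j) = v $ i"
    using i by (subst sum.cong[OF refl, of _ _ "\<lambda>j. if i = j then v $ j else 0"]) auto
  finally show ?thesis .
qed

lemma det_killed_mat_nonzero: "det killed_mat \<noteq> 0"
proof
  assume "det killed_mat = 0"
  then obtain v where vc: "v \<in> carrier_vec n" and v0: "v \<noteq> 0\<^sub>v n" and mv: "killed_mat *\<^sub>v v = 0\<^sub>v n"
    using det_0_iff_vec_prod_zero_field[OF killed_mat_carrier] by auto
  have eq: "v $ i = (\<Sum>j<n. (if i \<notin> A \<and> j \<notin> A then P i j else 0) * v $ j)" if i: "i < n" for i
    using arg_cong[OF mv, of "\<lambda>u. u $ i"] killed_mat_mult_vec[OF vc i] i by simp
  have vA: "v $ i = 0" if "i \<in> A" for i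
    using eq[of i] that A_sub by auto
  have "v $ i = 0" if i: "i < n" for i
  proof (rule maximum_principle[of A 1 "\<lambda>i. v $ i"])
    show "1 * v $ j = (\<Sum>l<n. P j l * v $ l)" if j: "j < n" "j \<notin> A" for j
    proof -
      have "v $ j = (\<Sum>l<n. (if j \<notin> A \<and> l \<notin> A then P j l else 0) * v $ l)" by (rule eq[OF j(1)])
      also have "\<dots> = (\<Sum>l<n. P j l * v $ l)" using j vA by (intro sum.cong) auto
      finally show ?thesis by simp
    qed
  qed (use A_sub A_nonempty vA i in auto)
  then have "v = 0\<^sub>v n" using vc by (intro eq_vecI) auto
  then show False using v0 by simp
qed

lemma exists_hitting_eq_solution: "\<exists>g. solves_hitting_eq g"
proof -
  have "killed_mat \<in> Units (ring_mat TYPE(real) n ())"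
    by (rule det_non_zero_imp_unit[OF killed_mat_carrier det_killed_mat_nonzero])
  then obtain B where Bc: "B \<in> carrier_mat n n" and MB: "killed_mat * B = 1\<^sub>m n"
    unfolding Units_def by (auto simp: ring_mat_simps)
  define b where "b = vec n (\<lambda>i. of_bool (i \<notin> A) :: real)"
  define gv where "gv = B *\<^sub>v b"
  have bc: "b \<in> carrier_vec n" unfolding b_def by simp
  have gvc: "gv \<in> carrier_vec n" unfolding gv_def using Bc bc by simp
  have "killed_mat *\<^sub>v gv = (killed_mat * B) *\<^sub>v b"
    unfolding gv_def by (rule assoc_mult_mat_vec[symmetric, OF killed_mat_carrier Bc bc])
  also have "\<dots> = b" using MB bc by simp
  finally have gv_eq: "killed_mat *\<^sub>v gv = b" .
  define g where "g = (\<lambda>i. if i < n \<and> i \<notin> A then gv $ i else 0)"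
  have "g i = 1 + (\<Sum>j<n. P i j * g j)" if i: "i < n" "i \<notin> A" for i
  proof -
    have "gv $ i = 1 + (\<Sum>j<n. (if i \<notin> A \<and> j \<notin> A then P i j else 0) * gv $ j)"
      using arg_cong[OF gv_eq, of "\<lambda>u. u $ i"] killed_mat_mult_vec[OF gvc i(1)] i
      unfolding b_def by simp
    also have "(\<Sum>j<n. (if i \<notin> A \<and> j \<notin> A then P i j else 0) * gv $ j) = (\<Sum>j<n. P i j * g j)"
      using i unfolding g_def by (intro sum.cong) auto
    finally show ?thesis unfolding g_def using i by simp
  qed
  then have "solves_hitting_eq g" unfolding solves_hitting_eq_def g_def by auto
  then show ?thesis by blast
qed

lemma hitting_eq_nonneg:
  assumes g: "solves_hitting_eq g" and i: "i < n"
  shows "g i \<ge> 0"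
proof (rule ccontr)
  assume "\<not> g i \<ge> 0"
  define m where "m = Min (g ` {..<n})"
  have m_le: "\<And>l. l < n \<Longrightarrow> m \<le> g l" unfolding m_def by (intro Min_le) auto
  have "m \<in> g ` {..<n}" unfolding m_def using i by (intro Min_in) auto
  then obtain j where j: "j < n" "g j = m" by auto
  have "m < 0" using m_le[OF i] \<open>\<not> g i \<ge> 0\<close> by simp
  then have "j \<notin> A" using hitting_eq_off_B[OF g, of j] j by force
  have "m = (\<Sum>l<n. P j l * m)" using P_row_sum[OF j(1)] by (simp add: sum_distrib_right[symmetric])
  also have "\<dots> \<le> (\<Sum>l<n. P j l * g l)"
    using P_nonneg j m_le by (intro sum_mono mult_left_mono) auto
  finally have "g j \<ge> 1 + m" using hitting_eq_on_B[OF g j(1) \<open>j \<notin> A\<close>] j by simp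
  then show False using j by simp
qed

lemma avoid_nonneg: "z < n \<Longrightarrow> avoid n P A j z \<ge> 0"
  by (induction j arbitrary: z) (auto intro!: sum_nonneg mult_nonneg_nonneg P_nonneg)

lemma avoid_eq_0_on_A: "z \<in> A \<Longrightarrow> avoid n P A j z = 0"
  by (cases j) auto

lemma sum_avoid_le_hitting_eq:
  assumes g: "solves_hitting_eq g"
  shows "z < n \<Longrightarrow> (\<Sum>j<N. avoid n P A j z) \<le> g z"
proof (induction N arbitrary: z)
  case 0
  then show ?case using hitting_eq_nonneg[OF g] by simp
next
  case (Suc N)
  show ?case
  proof (cases "z \<in> A")
    case True
    then show ?thesis using hitting_eq_off_B[OF g, of z] by (simp add: avoid_eq_0_on_A)
  next
    case False
    have "(\<Sum>j<Suc N. avoid n P A j z) = 1 + (\<Sum>j<N. \<Sum>y<n. P z y * avoid n P A j y)"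
      using False by (subst sum.lessThan_Suc_shift) simp
    also have "\<dots> = 1 + (\<Sum>y<n. P z y * (\<Sum>j<N. avoid n P A j y))"
      by (subst sum.swap) (simp add: sum_distrib_left)
    also have "\<dots> \<le> 1 + (\<Sum>y<n. P z y * g y)"
      using Suc P_nonneg by (intro add_left_mono sum_mono mult_left_mono) auto
    also have "\<dots> = g z" using hitting_eq_on_B[OF g Suc.prems False] by simp
    finally show ?thesis .
  qed
qed

lemma exp_hit_eq_suminf_avoid:
  assumes z: "z < n"
  shows "exp_hit n P A z = (\<Sum>j. ennreal (avoid n P A j z))"
proof -
  have "exp_hit n P A z
      = (\<integral>\<^sup>+ t. (\<Sum>j. ennreal (exp (-t) * t ^ j / fact j * avoid n P A j z) * indicator {0..} t) \<partial>lborel)"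
    unfolding exp_hit_def survival_def by simp
  also have "\<dots> = (\<Sum>j. \<integral>\<^sup>+ t. ennreal (exp (-t) * t ^ j / fact j * avoid n P A j z) * indicator {0..} t \<partial>lborel)"
    by (rule nn_integral_suminf) measurable
  also have "\<dots> = (\<Sum>j. ennreal (avoid n P A j z))"
    using nn_integral_Poisson_weight[OF avoid_nonneg[OF z]] by simp
  finally show ?thesis .
qed

lemma exp_hit_le_hitting_eq:
  assumes g: "solves_hitting_eq g" and z: "z < n"
  shows "exp_hit n P A z \<le> ennreal (g z)"
proof -
  have "(\<Sum>j. ennreal (avoid n P A j z)) = (SUP N. \<Sum>j<N. ennreal (avoid n P A j z))"
    by (rule suminf_eq_SUP)
  also have "\<dots> \<le> ennreal (g z)"
  proof (rule SUP_least)
    fix N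
    have "(\<Sum>j<N. ennreal (avoid n P A j z)) = ennreal (\<Sum>j<N. avoid n P A j z)"
      using avoid_nonneg[OF z] by simp
    also have "\<dots> \<le> ennreal (g z)" by (rule ennreal_leI[OF sum_avoid_le_hitting_eq[OF g z]])
    finally show "(\<Sum>j<N. ennreal (avoid n P A j z)) \<le> ennreal (g z)" .
  qed
  finally show ?thesis using exp_hit_eq_suminf_avoid[OF z] by simp
qed

definition vanishes_off_B :: "(nat \<Rightarrow> real) \<Rightarrow> bool" where
  "vanishes_off_B f \<longleftrightarrow> (\<forall>i. i \<notin> B \<longrightarrow> f i = 0)"

definition gap :: real where "gap = (1 - lambda2 n P) * (1 - \<epsilon>)"

lemma gap_pos: "gap > 0"
  unfolding gap_def using lambda2_lt_1 eps_lt_1 by simp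

lemma gap_le_2: "gap \<le> 2"
proof -
  have "(1 - lambda2 n P) * (1 - \<epsilon>) \<le> 2 * 1"
    using lambda2_ge_minus_1 lambda2_lt_1 eps_pos eps_lt_1 by (intro mult_mono) auto
  then show ?thesis unfolding gap_def by simp
qed

lemma sum_pi_B_le: "(\<Sum>i\<in>B. \<pi> i) \<le> \<epsilon>"
  using pi_sum A_big A_sub unfolding B_def by (simp add: sum_diff)

lemma pinner_one_sq_le_if_vanishes_off_B:
  assumes "vanishes_off_B f"
  shows "(pinner f (\<lambda>_. 1))\<^sup>2 \<le> \<epsilon> * pinner f f"
proof -
  have B_sub: "B \<subseteq> {..<n}" unfolding B_def by auto
  have sum_B: "(\<Sum>i<n. F i) = (\<Sum>i\<in>B. F i)" if "\<And>i. F i \<noteq> 0 \<Longrightarrow> i \<in> B" for F :: "nat \<Rightarrow> real"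
    using that B_sub by (intro sum.mono_neutral_right) auto
  have "(pinner f (\<lambda>_. 1))\<^sup>2 = (\<Sum>i\<in>B. \<pi> i * f i)\<^sup>2"
    unfolding pinner_def using assms unfolding vanishes_off_B_def by (subst sum_B) auto
  also have "\<dots> \<le> (\<Sum>i\<in>B. \<pi> i) * (\<Sum>i\<in>B. \<pi> i * (f i)\<^sup>2)"
    using B_sub pi_pos by (intro weighted_Cauchy_Schwarz_sum) (auto intro: less_imp_le)
  also have "\<dots> \<le> \<epsilon> * (\<Sum>i\<in>B. \<pi> i * (f i)\<^sup>2)"
    using B_sub pi_pos sum_pi_B_le
    by (intro mult_right_mono sum_nonneg) (auto intro!: mult_nonneg_nonneg less_imp_le[OF pi_pos])
  also have "(\<Sum>i\<in>B. \<pi> i * (f i)\<^sup>2) = pinner f f"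
    unfolding pinner_def using assms unfolding vanishes_off_B_def
    by (subst sum_B) (auto simp: power2_eq_square mult.assoc)
  finally show ?thesis .
qed

lemma spectral_gap_off_A:
  assumes "vanishes_off_B f"
  shows "pinner f (Pop f) \<le> (1 - gap) * pinner f f"
proof -
  have "(1 - lambda2 n P) * (pinner f (\<lambda>_. 1))\<^sup>2 \<le> (1 - lambda2 n P) * (\<epsilon> * pinner f f)"
    using pinner_one_sq_le_if_vanishes_off_B[OF assms] lambda2_lt_1 by (intro mult_left_mono) auto
  then show ?thesis
    using Poincare_inequality_uncentered[of f] unfolding gap_def by (simp add: algebra_simps)
qed

definition lazy_killed :: "(nat \<Rightarrow> real) \<Rightarrow> nat \<Rightarrow> real" where
  "lazy_killed f = (\<lambda>i. if i \<in> B then (f i + Pop f i) / 2 else 0)"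

lemma vanishes_off_B_lazy_killed: "vanishes_off_B (lazy_killed f)"
  unfolding vanishes_off_B_def lazy_killed_def by auto

lemma vanishes_off_B_lazy_killed_pow: "vanishes_off_B f \<Longrightarrow> vanishes_off_B ((lazy_killed ^^ m) f)"
  by (induction m) (auto simp: vanishes_off_B_lazy_killed)

lemma vanishes_off_B_linear:
  "vanishes_off_B f \<Longrightarrow> vanishes_off_B g \<Longrightarrow> vanishes_off_B (\<lambda>i. a * f i + b * g i)"
  unfolding vanishes_off_B_def by auto

lemma lazy_killed_linear:
  "lazy_killed (\<lambda>i. a * f i + b * g i) = (\<lambda>i. a * lazy_killed f i + b * lazy_killed g i)"
  unfolding lazy_killed_def by (auto simp: Pop_add Pop_scale field_simps)

lemma lazy_killed_pow_linear:
  "(lazy_killed ^^ m) (\<lambda>i. a * f i + b * g i)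
     = (\<lambda>i. a * (lazy_killed ^^ m) f i + b * (lazy_killed ^^ m) g i)"
  by (induction m) (auto simp: lazy_killed_linear)

lemma pinner_lazy_killed:
  assumes "vanishes_off_B f"
  shows "pinner f (lazy_killed g) = (pinner f g + pinner f (Pop g)) / 2"
proof -
  have "pinner f (lazy_killed g) = (\<Sum>i<n. \<pi> i * f i * ((g i + Pop g i) / 2))"
    unfolding pinner_def lazy_killed_def using assms unfolding vanishes_off_B_def by (intro sum.cong) auto
  also have "\<dots> = (pinner f g + pinner f (Pop g)) / 2"
    unfolding pinner_def by (simp add: sum_divide_distrib[symmetric] sum.distrib algebra_simps)
  finally show ?thesis .
qed

lemma lazy_killed_symmetric:
  assumes "vanishes_off_B f" "vanishes_off_B g"
  shows "pinner f (lazy_killed g) = pinner g (lazy_killed f)"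
  using pinner_lazy_killed[OF assms(1), of g] pinner_lazy_killed[OF assms(2), of f]
    pinner_commute[of f g] pinner_Pop_commute[of f g] by simp

lemma lazy_killed_form_bounds:
  assumes f: "vanishes_off_B f"
  shows "0 \<le> pinner f (lazy_killed f)" "pinner f (lazy_killed f) \<le> (1 - gap / 2) * pinner f f"
  using pinner_lazy_killed[OF f, of f] pinner_Pop_self_ge[of f] spectral_gap_off_A[OF f]
  by (simp_all add: algebra_simps)

lemma lazy_killed_Cauchy_Schwarz:
  assumes x: "vanishes_off_B x" and y: "vanishes_off_B y"
  shows "(pinner x (lazy_killed y))\<^sup>2 \<le> pinner x (lazy_killed x) * pinner y (lazy_killed y)"
proof (rule discriminant_le_if_quadratic_nonneg)
  show "0 \<le> pinner y (lazy_killed y)" by (rule lazy_killed_form_bounds(1)[OF y])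
  fix t
  define z where "z = (\<lambda>i. 1 * x i + t * y i)"
  have "0 \<le> pinner z (lazy_killed z)"
    unfolding z_def by (intro lazy_killed_form_bounds(1) vanishes_off_B_linear x y)
  also have "pinner z (lazy_killed z)
      = pinner x (lazy_killed x) + 2 * t * pinner x (lazy_killed y) + t\<^sup>2 * pinner y (lazy_killed y)"
    unfolding z_def lazy_killed_linear using lazy_killed_symmetric[OF x y]
    by (simp add: pinner_linear power2_eq_square algebra_simps)
  finally show "0 \<le> pinner x (lazy_killed x) + 2 * t * pinner x (lazy_killed y) + t\<^sup>2 * pinner y (lazy_killed y)" .
qed

text \<open>For the positive symmetric operator \<open>L\<close>: \<open>\<parallel>L f\<parallel>\<^sup>4 = \<langle>f, L (L f)\<rangle>\<^sup>2 \<le> \<langle>f, L f\<rangle> \<langle>L f, L (L f)\<rangle>\<close>.\<close>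
lemma lazy_killed_norm_le:
  assumes f: "vanishes_off_B f"
  shows "pinner (lazy_killed f) (lazy_killed f) \<le> (1 - gap / 2)\<^sup>2 * pinner f f"
proof -
  define y where "y = lazy_killed f"
  define c where "c = 1 - gap / 2"
  have c: "c \<ge> 0" unfolding c_def using gap_le_2 by simp
  have y: "vanishes_off_B y" unfolding y_def by (rule vanishes_off_B_lazy_killed)
  have "(pinner y y)\<^sup>2 = (pinner f (lazy_killed y))\<^sup>2"
    using lazy_killed_symmetric[OF f y] unfolding y_def by simp
  also have "\<dots> \<le> pinner f (lazy_killed f) * pinner y (lazy_killed y)"
    by (rule lazy_killed_Cauchy_Schwarz[OF f y])
  also have "\<dots> \<le> (c * pinner f f) * (c * pinner y y)"
    using lazy_killed_form_bounds[OF f] lazy_killed_form_bounds[OF y] unfolding c_def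
    by (intro mult_mono) auto
  finally have le: "pinner y y * pinner y y \<le> (c\<^sup>2 * pinner f f) * pinner y y"
    by (simp add: power2_eq_square algebra_simps)
  show ?thesis
  proof (cases "pinner y y = 0")
    case True
    then show ?thesis using pinner_self_nonneg[of f] unfolding y_def by simp
  next
    case False
    then have "pinner y y > 0" using pinner_self_nonneg[of y] by simp
    with le show ?thesis unfolding y_def c_def by simp
  qed
qed

lemma lazy_killed_pow_norm_le:
  assumes f: "vanishes_off_B f"
  shows "pinner ((lazy_killed ^^ m) f) ((lazy_killed ^^ m) f) \<le> ((1 - gap / 2)\<^sup>2) ^ m * pinner f f"
proof (induction m)
  case (Suc m)
  have "pinner ((lazy_killed ^^ Suc m) f) ((lazy_killed ^^ Suc m) f)
      \<le> (1 - gap / 2)\<^sup>2 * pinner ((lazy_killed ^^ m) f) ((lazy_killed ^^ m) f)"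
    using lazy_killed_norm_le[OF vanishes_off_B_lazy_killed_pow[OF f]] by simp
  also have "\<dots> \<le> (1 - gap / 2)\<^sup>2 * (((1 - gap / 2)\<^sup>2) ^ m * pinner f f)"
    using Suc by (intro mult_left_mono) auto
  finally show ?case by (simp add: mult.assoc)
qed simp

lemma lazy_killed_unit_interval:
  assumes "\<And>i. 0 \<le> f i \<and> f i \<le> 1"
  shows "0 \<le> lazy_killed f i \<and> lazy_killed f i \<le> 1"
proof (cases "i \<in> B")
  case True
  then have i: "i < n" unfolding B_def by simp
  have "0 \<le> Pop f i" unfolding Pop_def using assms P_nonneg i by (intro sum_nonneg mult_nonneg_nonneg) auto
  moreover have "Pop f i \<le> (\<Sum>j<n. P i j * 1)"
    unfolding Pop_def using assms P_nonneg i by (intro sum_mono mult_left_mono) auto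
  ultimately show ?thesis using True assms[of i] P_row_sum[OF i] unfolding lazy_killed_def by simp
qed (simp add: lazy_killed_def)

lemma lazy_killed_pow_indicator_unit_interval:
  "0 \<le> (lazy_killed ^^ m) (indicator B) i \<and> (lazy_killed ^^ m) (indicator B) i \<le> 1"
  by (induction m arbitrary: i) (simp_all add: lazy_killed_unit_interval)

lemma vanishes_off_B_hitting_eq: "solves_hitting_eq g \<Longrightarrow> vanishes_off_B g"
  using hitting_eq_off_B unfolding vanishes_off_B_def B_def by (meson Diff_iff lessThan_iff not_le)

lemma hitting_eq_fixed_point:
  assumes g: "solves_hitting_eq g"
  shows "g = (\<lambda>i. (1/2) * indicator B i + 1 * lazy_killed g i)"
proof
  fix i
  show "g i = (1/2) * indicator B i + 1 * lazy_killed g i"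
  proof (cases "i \<in> B")
    case True
    then have "g i = 1 + Pop g i" using hitting_eq_on_B[OF g, of i] unfolding B_def Pop_def by simp
    then show ?thesis using True unfolding lazy_killed_def by (simp add: field_simps)
  next
    case False
    then show ?thesis using hitting_eq_off_B[OF g, of i] unfolding lazy_killed_def B_def by auto
  qed
qed

lemma hitting_eq_expansion:
  assumes g: "solves_hitting_eq g"
  shows "g i = (1/2) * (\<Sum>m<M. (lazy_killed ^^ m) (indicator B) i) + (lazy_killed ^^ M) g i"
proof (induction M)
  case (Suc M)
  have "(lazy_killed ^^ M) g = (lazy_killed ^^ M) (\<lambda>i. (1/2) * indicator B i + 1 * lazy_killed g i)"
    by (subst hitting_eq_fixed_point[OF g]) (rule refl)
  also have "\<dots> = (\<lambda>i. (1/2) * (lazy_killed ^^ M) (indicator B) i + (lazy_killed ^^ Suc M) g i)"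
    by (simp only: lazy_killed_pow_linear) (simp only: funpow_Suc_right comp_apply mult_1)
  finally have "(lazy_killed ^^ M) g i = (1/2) * (lazy_killed ^^ M) (indicator B) i + (lazy_killed ^^ Suc M) g i"
    by (rule fun_cong)
  with Suc.IH show ?case by (simp add: algebra_simps)
qed simp

lemma hitting_eq_le:
  assumes "solves_hitting_eq g"
  shows "g i \<le> real M / 2 + (lazy_killed ^^ M) g i"
proof -
  have "(\<Sum>m<M. (lazy_killed ^^ m) (indicator B) i) \<le> (\<Sum>m<M. 1)"
    using lazy_killed_pow_indicator_unit_interval by (intro sum_mono) auto
  then show ?thesis using hitting_eq_expansion[OF assms, of i M] by simp
qed

text \<open>With \<open>P g = g - 1\<close> on \<open>B\<close>, the spectral gap gives \<open>\<gamma> \<parallel>g\<parallel>\<^sup>2 \<le> \<langle>g, 1\<rangle>\<close>, whose square is at most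
  \<open>\<epsilon> \<parallel>g\<parallel>\<^sup>2\<close>.\<close>
lemma hitting_eq_norm_le:
  assumes g: "solves_hitting_eq g"
  shows "gap\<^sup>2 * pinner g g \<le> \<epsilon>"
proof -
  have gB: "vanishes_off_B g" by (rule vanishes_off_B_hitting_eq[OF g])
  have "pinner g (Pop g) = pinner g (\<lambda>i. g i - 1)"
    unfolding pinner_def
  proof (intro sum.cong refl)
    fix i assume "i \<in> {..<n}"
    then show "\<pi> i * g i * Pop g i = \<pi> i * g i * (g i - 1)"
      using hitting_eq_on_B[OF g, of i] hitting_eq_off_B[OF g, of i] unfolding Pop_def
      by (cases "i \<in> A") auto
  qed
  then have "pinner g g - pinner g (\<lambda>_. 1) \<le> (1 - gap) * pinner g g"
    using spectral_gap_off_A[OF gB] by (simp add: pinner_diff_right)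
  then have "gap * pinner g g \<le> pinner g (\<lambda>_. 1)" by (simp add: algebra_simps)
  then have "(gap * pinner g g)\<^sup>2 \<le> (pinner g (\<lambda>_. 1))\<^sup>2"
    using gap_pos pinner_self_nonneg[of g] by (intro power_mono) auto
  also have "\<dots> \<le> \<epsilon> * pinner g g" by (rule pinner_one_sq_le_if_vanishes_off_B[OF gB])
  finally have "(gap\<^sup>2 * pinner g g) * pinner g g \<le> \<epsilon> * pinner g g"
    by (simp add: power2_eq_square algebra_simps)
  then show ?thesis
    using eps_pos pinner_self_nonneg[of g] by (cases "pinner g g = 0") simp_all
qed

lemma level_set_of_remainder_small:
  assumes g: "solves_hitting_eq g"
  shows "(\<Sum>x\<in>{x. x < n \<and> (lazy_killed ^^ M) g x > 1 / gap}. \<pi> x) \<le> ((1 - gap / 2)\<^sup>2) ^ M * \<epsilon>"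
proof -
  let ?w = "(lazy_killed ^^ M) g"
  have "(1 / gap)\<^sup>2 * (\<Sum>x\<in>{x. x < n \<and> ?w x > 1 / gap}. \<pi> x) \<le> pinner ?w ?w"
    using gap_pos by (intro Chebyshev_level_set) simp
  also have "\<dots> \<le> ((1 - gap / 2)\<^sup>2) ^ M * pinner g g"
    by (rule lazy_killed_pow_norm_le[OF vanishes_off_B_hitting_eq[OF g]])
  also have "\<dots> \<le> ((1 - gap / 2)\<^sup>2) ^ M * (\<epsilon> / gap\<^sup>2)"
    using hitting_eq_norm_le[OF g] gap_pos by (intro mult_left_mono) (auto simp: field_simps)
  finally show ?thesis using gap_pos by (simp add: field_simps power2_eq_square)
qed

lemma exists_good_start_set:
  "\<exists>I \<subseteq> {..<n}. (\<Sum>x\<in>I. \<pi> x) \<ge> 1 - \<epsilon> / (2 * 3 ^ k) \<and>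
     (\<forall>z\<in>I. exp_hit n P A z \<le> ennreal ((3 + real k) * (1 / (1 - \<epsilon>)) * t_rel n P * ln 3))"
proof -
  obtain g where g: "solves_hitting_eq g" using exists_hitting_eq_solution by blast
  define T where "T = (3 + real k) * ln 3 / gap"
  obtain M where M: "real M / 2 + 1 / gap \<le> T" "2 * (3 + real k) * ln 3 - 4 \<le> gap * real M"
    unfolding T_def by (rule exists_expansion_length[OF gap_pos gap_le_2])
  define I where "I = {z. z < n \<and> (lazy_killed ^^ M) g z \<le> 1 / gap}"
  have I_sub: "I \<subseteq> {..<n}" unfolding I_def by auto
  have hit: "exp_hit n P A z \<le> ennreal T" if "z \<in> I" for z
  proof -
    have "g z \<le> T" using hitting_eq_le[OF g, of z M] that M(1) unfolding I_def by simp
    then show ?thesis using order_trans[OF exp_hit_le_hitting_eq[OF g] ennreal_leI] that I_sub by blast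
  qed
  have "((1 - gap / 2)\<^sup>2) ^ M * \<epsilon> \<le> 1 / (2 * 3 ^ k) * \<epsilon>"
    using M(2) eps_pos by (intro mult_right_mono lazy_contraction_power_le gap_pos gap_le_2) auto
  moreover have "{..<n} - I = {x. x < n \<and> (lazy_killed ^^ M) g x > 1 / gap}" unfolding I_def by auto
  ultimately have "(\<Sum>x\<in>{..<n} - I. \<pi> x) \<le> \<epsilon> / (2 * 3 ^ k)"
    using level_set_of_remainder_small[OF g, of M] by simp
  moreover have "(\<Sum>x\<in>I. \<pi> x) = 1 - (\<Sum>x\<in>{..<n} - I. \<pi> x)"
    using pi_sum sum.subset_diff[of I "{..<n}" \<pi>] I_sub by simp
  moreover have "T = (3 + real k) * (1 / (1 - \<epsilon>)) * t_rel n P * ln 3"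
    unfolding T_def gap_def t_rel_def using lambda2_lt_1 eps_lt_1 by (simp add: field_simps)
  ultimately show ?thesis using hit I_sub by auto
qed

end

theorem lemma4p5:
  fixes n :: nat and P :: "nat \<Rightarrow> nat \<Rightarrow> real" and \<pi> :: "nat \<Rightarrow> real"
    and \<epsilon> :: real and k :: nat and A :: "nat set"
  assumes n2: "n \<ge> 2"
    and P_nonneg: "\<forall>i<n. \<forall>j<n. P i j \<ge> 0"
    and P_stoch: "\<forall>i<n. (\<Sum>j<n. P i j) = 1"
    and pi_pos: "\<forall>i<n. \<pi> i > 0"
    and pi_sum: "(\<Sum>i<n. \<pi> i) = 1"
    and reversible: "\<forall>i<n. \<forall>j<n. \<pi> i * P i j = \<pi> j * P j i"
    and irred: "irreducible_chain n P"
    and eps: "0 < \<epsilon>" "\<epsilon> < 1"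
    and A_sub: "A \<subseteq> {..<n}"
    and A_big: "(\<Sum>x\<in>A. \<pi> x) \<ge> 1 - \<epsilon>"
  shows "\<exists>I \<subseteq> {..<n}. (\<Sum>x\<in>I. \<pi> x) \<ge> 1 - \<epsilon> / (2 * 3 ^ k) \<and>
           (\<forall>z\<in>I. exp_hit n P A z \<le>
              ennreal ((3 + real k) * (1 / (1 - \<epsilon>)) * t_rel n P * ln 3))"
proof -
  interpret hitting_chain n P \<pi> A \<epsilon>
    by unfold_locales (use assms in auto)
  show ?thesis by (rule exists_good_start_set)
qed

end
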